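(* Let $\alpha,\beta,\gamma\in\mathbb{Z}[i]$ satisfy $\alpha^2+i\beta^2+(1+i)\gamma^2=0$, $\alpha\beta\gamma\neq0$, $\gcd(\alpha,\beta,\gamma)\in U$, and suppose $\alpha=i^m\alpha'$, $\beta=i^n\beta'$, $\gamma=i^l\gamma'$ with $m,n,l\in\{0,1\}$ and $\alpha',\beta',\gamma'\in O^I$. Then $m+l\equiv n+l\equiv1\pmod 2$.
   Context: $\mathbb{Z}[i]$ is the ring of Gaussian integers, $U=\{1,-1,i,-i\}$ its unit group; $R(\alpha),I(\alpha)$ are real and imaginary parts. $O=\{\alpha: R(\alpha)+I(\alpha)\equiv1\pmod 2\}$, $O^I=\{\alpha\in O: R(\alpha)\equiv 1\pmod 4\}$. *)

theory Defs
  imports Complex_Main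
begin

definition gauss_int :: "complex \<Rightarrow> bool" where
  "gauss_int z \<longleftrightarrow> Re z \<in> \<int> \<and> Im z \<in> \<int>"

definition gdvd :: "complex \<Rightarrow> complex \<Rightarrow> bool" where
  "gdvd d z \<longleftrightarrow> (\<exists>k. gauss_int k \<and> z = d * k)"

definition gunits :: "complex set" where
  "gunits = {1, -1, \<i>, -\<i>}"

text \<open>gcd(a,b,c) is in U: every common Gaussian-integer divisor is a unit
(the gcd is only defined up to units).\<close>
definition gcd3_unit :: "complex \<Rightarrow> complex \<Rightarrow> complex \<Rightarrow> bool" where
  "gcd3_unit a b c \<longleftrightarrow>
     (\<forall>d. gauss_int d \<and> gdvd d a \<and> gdvd d b \<and> gdvd d c \<longrightarrow> d \<in> gunits)"

definition gO :: "complex set" where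
  "gO = {z. gauss_int z \<and> odd (\<lfloor>Re z\<rfloor> + \<lfloor>Im z\<rfloor>)}"

definition gOI :: "complex set" where
  "gOI = {z. z \<in> gO \<and> \<lfloor>Re z\<rfloor> mod 4 = 1}"

end

theory Submission
  imports Defs
begin

text \<open>Every element of \<open>O\<^sup>I\<close> squares to \<open>1\<close> modulo \<open>4\<close>, and \<open>(\<i>\<^sup>m)\<^sup>2 = (-1)\<^sup>m\<close>.
  Reducing \<open>\<alpha>\<^sup>2 + \<i>\<beta>\<^sup>2 + (1+\<i>)\<gamma>\<^sup>2 = 0\<close> modulo \<open>4\<close> therefore gives
  \<open>(-1)\<^sup>m + \<i>(-1)\<^sup>n + (1+\<i>)(-1)\<^sup>l \<equiv> 0\<close>, i.e. \<open>4\<close> divides both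
  \<open>(-1)\<^sup>m + (-1)\<^sup>l\<close> and \<open>(-1)\<^sup>n + (-1)\<^sup>l\<close>, which happens only when the exponents
  have different parities.\<close>

lemma gauss_int_add: "gauss_int a \<Longrightarrow> gauss_int b \<Longrightarrow> gauss_int (a + b)"
  by (auto simp: gauss_int_def)

lemma gauss_int_mult: "gauss_int a \<Longrightarrow> gauss_int b \<Longrightarrow> gauss_int (a * b)"
  by (auto simp: gauss_int_def)

lemma gauss_int_of_int: "gauss_int (of_int k)"
  by (simp add: gauss_int_def)

lemma gauss_int_1: "gauss_int 1"
  by (simp add: gauss_int_def)

lemma gauss_int_ii: "gauss_int \<i>"
  by (simp add: gauss_int_def)

lemma gauss_int_minus_one_power: "gauss_int ((-1) ^ m)"
  using gauss_int_of_int[of "(-1) ^ m"] by simp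

lemma gOI_square_mod4:
  assumes "x \<in> gOI"
  obtains k where "gauss_int k" "x\<^sup>2 = 1 + 4 * k"
proof -
  define a where "a = \<lfloor>Re x\<rfloor>"
  define b where "b = \<lfloor>Im x\<rfloor>"
  have x: "x = of_int a + \<i> * of_int b"
    using assms by (simp add: a_def b_def gOI_def gO_def gauss_int_def complex_eq_iff)
  have a_mod4: "a mod 4 = 1" and odd_ab: "odd (a + b)"
    using assms by (auto simp: a_def b_def gOI_def gO_def)
  obtain s where s: "a = 4 * s + 1"
    using a_mod4 by (metis div_mod_decomp_int add.commute mult.commute)
  have "even b"
    using a_mod4 odd_ab by presburger
  then obtain t where t: "b = 2 * t" ..
  have "x\<^sup>2 = 1 + 4 * (of_int (4 * s\<^sup>2 + 2 * s - t\<^sup>2) + \<i> * of_int (4 * s * t + t))"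
    by (simp add: x s t power2_eq_square algebra_simps)
  then show thesis
    by (rule that[rotated]) (intro gauss_int_add gauss_int_mult gauss_int_of_int gauss_int_ii)
qed

lemma ii_power_square: "(\<i> ^ m)\<^sup>2 = (-1) ^ m"
  by (simp add: power_mult_distrib[symmetric] power_mult[symmetric] mult.commute[of m])

lemma four_dvd_minus_one_power_sum_iff:
  "(4::int) dvd (-1) ^ m + (-1) ^ l \<longleftrightarrow> odd (m + l)"
  by (cases "even m"; cases "even l") auto

lemma four_dvd_parts_of_gauss_multiple:
  assumes "gauss_int K" and "of_int a + \<i> * of_int b + 4 * K = 0"
  shows "(4::int) dvd a" and "(4::int) dvd b"
proof -
  obtain r s where rs: "Re K = of_int r" "Im K = of_int s"
    using assms(1) by (auto simp: gauss_int_def elim!: Ints_cases)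
  have "Re (of_int a + \<i> * of_int b + 4 * K) = 0" and "Im (of_int a + \<i> * of_int b + 4 * K) = 0"
    using assms(2) by simp_all
  then have "a + 4 * r = 0" and "b + 4 * s = 0"
    using rs by (simp_all add: of_int_eq_0_iff[of "_ + 4 * _", symmetric])
  then show "(4::int) dvd a" and "(4::int) dvd b"
    by (metis add_eq_0_iff dvd_minus_iff dvd_triv_left)+
qed

theorem lemma4p17:
  fixes \<alpha> \<beta> \<gamma> \<alpha>' \<beta>' \<gamma>' :: complex and m n l :: nat
  assumes "gauss_int \<alpha>" and "gauss_int \<beta>" and "gauss_int \<gamma>"
    and "\<alpha>^2 + \<i> * \<beta>^2 + (1 + \<i>) * \<gamma>^2 = 0"
    and "\<alpha> * \<beta> * \<gamma> \<noteq> 0"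
    and "gcd3_unit \<alpha> \<beta> \<gamma>"
    and "m \<in> {0,1}" and "n \<in> {0,1}" and "l \<in> {0,1}"
    and "\<alpha>' \<in> gOI" and "\<beta>' \<in> gOI" and "\<gamma>' \<in> gOI"
    and "\<alpha> = \<i>^m * \<alpha>'" and "\<beta> = \<i>^n * \<beta>'" and "\<gamma> = \<i>^l * \<gamma>'"
  shows "odd (m + l) \<and> odd (n + l)"
proof -
  obtain k1 where k1: "gauss_int k1" "\<alpha>'\<^sup>2 = 1 + 4 * k1" using gOI_square_mod4 assms(10) .
  obtain k2 where k2: "gauss_int k2" "\<beta>'\<^sup>2 = 1 + 4 * k2" using gOI_square_mod4 assms(11) .
  obtain k3 where k3: "gauss_int k3" "\<gamma>'\<^sup>2 = 1 + 4 * k3" using gOI_square_mod4 assms(12) .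
  define K where "K = (-1) ^ m * k1 + \<i> * (-1) ^ n * k2 + (1 + \<i>) * (-1) ^ l * k3"
  have "gauss_int K"
    unfolding K_def
    by (intro gauss_int_add gauss_int_mult gauss_int_1 gauss_int_ii gauss_int_minus_one_power k1(1) k2(1) k3(1))
  have squares: "\<alpha>\<^sup>2 = (-1) ^ m * (1 + 4 * k1)" "\<beta>\<^sup>2 = (-1) ^ n * (1 + 4 * k2)"
    "\<gamma>\<^sup>2 = (-1) ^ l * (1 + 4 * k3)"
    by (simp_all only: assms(13-15) power_mult_distrib ii_power_square k1(2) k2(2) k3(2))
  have "of_int ((-1) ^ m + (-1) ^ l) + \<i> * of_int ((-1) ^ n + (-1) ^ l) + 4 * K
      = \<alpha>\<^sup>2 + \<i> * \<beta>\<^sup>2 + (1 + \<i>) * \<gamma>\<^sup>2"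
    unfolding squares K_def by (simp add: algebra_simps)
  then have "of_int ((-1) ^ m + (-1) ^ l) + \<i> * of_int ((-1) ^ n + (-1) ^ l) + 4 * K = 0"
    using assms(4) by (simp only:)
  from four_dvd_parts_of_gauss_multiple[OF \<open>gauss_int K\<close> this] show ?thesis
    by (simp add: four_dvd_minus_one_power_sum_iff)
qed

end
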